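(* Let $M \neq \{0\}$ be a semiideal of $\mathbb{N}_0$ of period $d$. Then the quotient $\mathbb{N}_0/M$ is isomorphic to $\mathbb{Z}/(d)$ (as $\mathbb{N}_0$-semimodules, i.e. commutative monoids).
   Context: $\mathbb{N}_0$ is the semiring of natural numbers including $0$. A semiideal of $\mathbb{N}_0$ is a nonempty subset closed under addition and multiplication by elements of $\mathbb{N}_0$. For a semiideal $M\neq 0$, a difference of $M$ is an element $e \in \mathbb{N}$ with $x+e=y$ for some $x,y\in M$, $x\neq 0$; the period of $M$ is the minimal difference. $\mathbb{N}_0/M$ denotes the set of equivalence classes of the congruence relation $n \sim_M n' \iff \exists a, b \in M: n + a = n' + b$, with addition $\bar n + \bar n' = \overline{n+n'}$. $\mathbb{Z}/(d)$ is regarded as a commutative monoid under addition. *)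

theory Defs
  imports Main
begin

definition semiideal :: "nat set \<Rightarrow> bool" where
  "semiideal M \<longleftrightarrow> M \<noteq> {} \<and> (\<forall>x\<in>M. \<forall>y\<in>M. x + y \<in> M) \<and> (\<forall>r. \<forall>x\<in>M. r * x \<in> M)"

definition is_difference :: "nat set \<Rightarrow> nat \<Rightarrow> bool" where
  "is_difference M e \<longleftrightarrow> e \<ge> 1 \<and> (\<exists>x\<in>M. \<exists>y\<in>M. x \<noteq> 0 \<and> x + e = y)"

definition period :: "nat set \<Rightarrow> nat" where
  "period M = (LEAST e. is_difference M e)"

definition semi_cong :: "nat set \<Rightarrow> (nat \<times> nat) set" where
  "semi_cong M = {(n, n'). \<exists>a\<in>M. \<exists>b\<in>M. n + a = n' + b}"

definition quot_classes :: "nat set \<Rightarrow> nat set set" where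
  "quot_classes M = UNIV // semi_cong M"

definition cls :: "nat set \<Rightarrow> nat \<Rightarrow> nat set" where
  "cls M n = semi_cong M `` {n}"

text \<open>Isomorphism of the commutative monoid N_0/M (addition of classes by
  representatives) with Z/(d), the latter represented by {0..<d} with addition mod d.\<close>
definition quot_iso_Zmod :: "nat set \<Rightarrow> nat \<Rightarrow> (nat set \<Rightarrow> nat) \<Rightarrow> bool" where
  "quot_iso_Zmod M d f \<longleftrightarrow>
     bij_betw f (quot_classes M) {0..<d} \<and>
     f (cls M 0) = 0 \<and>
     (\<forall>n n'. f (cls M (n + n')) = (f (cls M n) + f (cls M n')) mod d)"

end

theory Submission
  imports Defs
begin

text \<open>Let \<open>d\<close> be the period, realised by \<open>x, x + d \<in> M\<close> with \<open>x \<noteq> 0\<close>. Every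
  \<open>y \<in> M\<close> is a multiple of \<open>d\<close>: otherwise \<open>y mod d\<close> would be a smaller difference,
  between two suitable combinations of \<open>x\<close> and \<open>x + d\<close>. Hence \<open>x = q d\<close>, and the
  combinations of \<open>q d\<close> and \<open>(q + 1) d\<close> contain all large multiples of \<open>d\<close>. So two
  numbers are congruent modulo \<open>M\<close> exactly when they are congruent modulo \<open>d\<close>.\<close>

lemma semiideal_add: "semiideal M \<Longrightarrow> x \<in> M \<Longrightarrow> y \<in> M \<Longrightarrow> x + y \<in> M"
  and semiideal_mult: "semiideal M \<Longrightarrow> x \<in> M \<Longrightarrow> r * x \<in> M"
  unfolding semiideal_def by blast+

lemma is_difference_period:
  assumes "semiideal M" and "M \<noteq> {0}"
  shows "is_difference M (period M)"
proof -
  obtain m where m: "m \<in> M" "m \<noteq> 0"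
    using assms unfolding semiideal_def by blast
  then have "is_difference M m"
    unfolding is_difference_def using semiideal_add[OF assms(1) m(1) m(1)] by auto
  then show ?thesis
    unfolding period_def by (rule LeastI)
qed

lemma semiideal_combination_mem:
  assumes "semiideal M" and "x \<in> M" and "x + e \<in> M" and "j \<le> k"
  shows "k * x + j * e \<in> M"
proof -
  have "k * x + j * e = (k - j) * x + j * (x + e)"
    using \<open>j \<le> k\<close> by (simp add: algebra_simps)
  then show ?thesis
    using assms by (simp add: semiideal_add semiideal_mult)
qed

lemma period_dvd:
  assumes "semiideal M" and "M \<noteq> {0}" and "y \<in> M"
  shows "period M dvd y"
proof (rule ccontr)
  assume not_dvd: "\<not> period M dvd y"
  define d where "d = period M"
  obtain x where x: "x \<in> M" "x \<noteq> 0" "x + d \<in> M" "d \<ge> 1"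
    using is_difference_period[OF assms(1,2)] unfolding is_difference_def d_def by auto
  define k where "k = Suc (y div d)"
  have lower: "k * x + (y div d) * d \<in> M"
    by (rule semiideal_combination_mem[OF assms(1) x(1) x(3)]) (simp add: k_def)
  have upper: "k * x + y \<in> M"
    using assms(1,3) x(1) by (simp add: semiideal_add semiideal_mult)
  have "y mod d \<noteq> 0" and "k * x + (y div d) * d \<noteq> 0"
    using not_dvd x(2) k_def by (auto simp: d_def dvd_eq_mod_eq_0)
  moreover have "k * x + (y div d) * d + y mod d = k * x + y"
    by simp
  ultimately have "is_difference M (y mod d)"
    unfolding is_difference_def using lower upper
    by (intro conjI bexI[of _ "k * x + (y div d) * d"] bexI[of _ "k * x + y"]) auto
  then have "d \<le> y mod d"
    unfolding d_def period_def by (rule Least_le)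
  moreover have "y mod d < d"
    using x(4) by simp
  ultimately show False
    by simp
qed

lemma eventually_multiples_of_period_mem:
  assumes "semiideal M" and "M \<noteq> {0}"
  obtains N where "\<And>n. N \<le> n \<Longrightarrow> n * period M \<in> M"
proof -
  define d where "d = period M"
  obtain x where x: "x \<in> M" "x \<noteq> 0" "x + d \<in> M"
    using is_difference_period[OF assms] unfolding is_difference_def d_def by auto
  obtain q where q: "x = q * d"
    using period_dvd[OF assms x(1)] unfolding d_def by (metis dvdE mult.commute)
  with x(2) have "q \<ge> 1"
    by (cases q) auto
  have "n * period M \<in> M" if "q * q \<le> n" for n
  proof -
    have "q \<le> n div q"
      using \<open>q \<ge> 1\<close> that div_le_mono[of "q * q" n q] by simp
    moreover have "n mod q < q"
      using \<open>q \<ge> 1\<close> by simp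
    ultimately have "(n div q) * x + (n mod q) * d \<in> M"
      by (intro semiideal_combination_mem[OF assms(1) x(1) x(3)]) simp
    also have "(n div q) * x + (n mod q) * d = (n div q * q + n mod q) * d"
      unfolding q distrib_right by (simp only: mult.assoc)
    also have "n div q * q + n mod q = n"
      by (rule div_mult_mod_eq)
    finally show ?thesis
      by (simp only: d_def)
  qed
  then show thesis
    by (rule that)
qed

lemma semi_cong_iff_mod_period:
  assumes "semiideal M" and "M \<noteq> {0}"
  shows "(n, n') \<in> semi_cong M \<longleftrightarrow> n mod period M = n' mod period M"
proof
  assume "(n, n') \<in> semi_cong M"
  then obtain a b where ab: "a \<in> M" "b \<in> M" "n + a = n' + b"
    unfolding semi_cong_def by blast
  have "(n + a) mod period M = n mod period M" "(n' + b) mod period M = n' mod period M"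
    using period_dvd[OF assms ab(1)] period_dvd[OF assms ab(2)] by (auto elim!: dvdE)
  with ab(3) show "n mod period M = n' mod period M"
    by simp
next
  assume same_mod: "n mod period M = n' mod period M"
  define d where "d = period M"
  obtain N where N: "\<And>m. N \<le> m \<Longrightarrow> m * d \<in> M"
    using eventually_multiples_of_period_mem[OF assms] unfolding d_def by blast
  obtain r i j where "n = r + i * d" "n' = r + j * d"
    using div_mult_mod_eq[of n d] div_mult_mod_eq[of n' d] same_mod
    unfolding d_def by (metis add.commute)
  then have "n + (N + j) * d = n' + (N + i) * d"
    by (simp add: algebra_simps)
  then show "(n, n') \<in> semi_cong M"
    unfolding semi_cong_def using N[of "N + j"] N[of "N + i"] by auto
qed

lemma quot_iso_Zmod_if_semi_cong_mod:
  assumes "d > 0" and cong: "\<And>n n'. (n, n') \<in> semi_cong M \<longleftrightarrow> n mod d = n' mod d"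
  shows "quot_iso_Zmod M d (\<lambda>C. (SOME k. k \<in> C) mod d)"
proof -
  define f where "f C = (SOME k. k \<in> C) mod d" for C
  have cls_eq: "cls M n = {k. k mod d = n mod d}" for n
    unfolding cls_def using cong by auto
  have f_cls: "f (cls M n) = n mod d" for n
  proof -
    have "(SOME k. k \<in> cls M n) \<in> cls M n"
      by (rule someI[of _ n]) (simp add: cls_eq)
    then show ?thesis
      unfolding f_def cls_eq by simp
  qed
  have classes: "quot_classes M = range (cls M)"
    unfolding quot_classes_def cls_def quotient_def by auto
  have "inj_on f (range (cls M))"
    by (rule inj_onI) (clarsimp simp: f_cls, simp add: cls_eq)
  moreover have "f ` range (cls M) = {0..<d}"
  proof -
    have "f ` range (cls M) = range (\<lambda>n. n mod d)"
      by (auto simp: f_cls image_iff)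
    also have "\<dots> = {0..<d}"
      using \<open>d > 0\<close> by (auto simp: image_iff) (metis mod_less)
    finally show ?thesis .
  qed
  ultimately show ?thesis
    unfolding quot_iso_Zmod_def f_def[symmetric] bij_betw_def classes
    by (simp add: f_cls mod_add_eq)
qed

theorem theorem4p13:
  fixes M :: "nat set"
  assumes "semiideal M" and "M \<noteq> {0}"
  shows "\<exists>f. quot_iso_Zmod M (period M) f"
proof -
  have "period M > 0"
    using is_difference_period[OF assms] unfolding is_difference_def by simp
  then show ?thesis
    using quot_iso_Zmod_if_semi_cong_mod semi_cong_iff_mod_period[OF assms] by blast
qed

end
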